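(* If $G$ is a (finite, loopless) multigraph and $v\in V(G)$, then \[\sum_{u\in N(v)}\frac{\mu(uv)}{d(v) + \mu(uv)} \leq \frac{|N(v)|}{1 + |N(v)|}.\]
   Context: $N(v)$ is the set of vertices adjacent to $v$, $\mu(uv)$ is the number of edges of $G$ incident to both $u$ and $v$, and $d(v)=\sum_{u\in N(v)}\mu(uv)$. *)

theory Defs
  imports Complex_Main
begin

text \<open>A finite loopless multigraph is given by a finite vertex set V and an edge
multiplicity function mu: mu u v is the number of edges joining u and v.\<close>

definition multigraph :: "'a set \<Rightarrow> ('a \<Rightarrow> 'a \<Rightarrow> nat) \<Rightarrow> bool" where
  "multigraph V mu \<longleftrightarrow> finite V
     \<and> (\<forall>u v. mu u v = mu v u)
     \<and> (\<forall>v. mu v v = 0)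
     \<and> (\<forall>u v. mu u v > 0 \<longrightarrow> u \<in> V \<and> v \<in> V)"

definition nbhd :: "'a set \<Rightarrow> ('a \<Rightarrow> 'a \<Rightarrow> nat) \<Rightarrow> 'a \<Rightarrow> 'a set" where
  "nbhd V mu v = {u \<in> V. mu u v > 0}"

definition deg :: "'a set \<Rightarrow> ('a \<Rightarrow> 'a \<Rightarrow> nat) \<Rightarrow> 'a \<Rightarrow> nat" where
  "deg V mu v = (\<Sum>u\<in>nbhd V mu v. mu u v)"

end

theory Submission
  imports Defs
begin

text \<open>For \<open>d > 0\<close> the map \<open>x \<mapsto> x / (d + x)\<close> is concave on \<open>x \<ge> 0\<close>, so by Jensen the sum of
  \<open>w\<^sub>i / (d + w\<^sub>i)\<close> over \<open>n\<close> nonnegative weights with total \<open>d\<close> is at most its value at the mean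
  \<open>d / n\<close>, times \<open>n\<close>, which is \<open>n / (n + 1)\<close>. Concretely, each term is bounded by the tangent
  line at \<open>d / n\<close>, and the linear parts of these bounds cancel when summed.\<close>

lemma div_add_le_tangent:
  fixes a d n :: real
  assumes "a \<ge> 0" "d > 0" "n > 0"
  shows "a / (d + a) \<le> 1 / (n + 1) + n * (n * a - d) / (d * (n + 1)^2)"
proof -
  have "(d + a) * (d + n^2 * a) - (n + 1)^2 * a * d = (d - n * a)^2"
    by (simp add: algebra_simps power2_eq_square)
  then have "(n + 1)^2 * a * d \<le> (d + a) * (d + n^2 * a)"
    by (smt (verit) zero_le_power2)
  moreover have "1 / (n + 1) + n * (n * a - d) / (d * (n + 1)^2) = (d + n^2 * a) / (d * (n + 1)^2)"
    using assms by (simp add: divide_simps) (simp add: algebra_simps power2_eq_square)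
  ultimately show ?thesis
    using assms by (simp add: divide_simps) (simp add: algebra_simps power2_eq_square)
qed

lemma sum_div_add_sum_le_card:
  fixes w :: "'a \<Rightarrow> real"
  assumes "finite A" and nonneg: "\<And>x. x \<in> A \<Longrightarrow> w x \<ge> 0"
  shows "(\<Sum>x\<in>A. w x / (sum w A + w x)) \<le> real (card A) / (1 + real (card A))"
proof (cases "sum w A = 0")
  case True
  then have "\<forall>x\<in>A. w x = 0"
    using sum_nonneg_eq_0_iff[of A w] assms by blast
  then show ?thesis by simp
next
  case False
  define d where "d = sum w A"
  define n where "n = real (card A)"
  have "d > 0"
    using False nonneg unfolding d_def by (simp add: order_less_le sum_nonneg)
  moreover have "n > 0"
    using False \<open>finite A\<close> unfolding n_def by (cases "A = {}") (auto simp: card_gt_0_iff)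
  ultimately have "(\<Sum>x\<in>A. w x / (d + w x)) \<le> (\<Sum>x\<in>A. 1 / (n + 1) + n * (n * w x - d) / (d * (n + 1)^2))"
    by (intro sum_mono div_add_le_tangent) (auto simp: nonneg)
  also have "\<dots> = n / (n + 1) + n * (n * d - n * d) / (d * (n + 1)^2)"
    by (simp add: sum.distrib n_def d_def sum_subtractf
        sum_divide_distrib[symmetric] sum_distrib_left[symmetric])
  also have "\<dots> = n / (1 + n)"
    by (simp add: add.commute)
  finally show ?thesis
    unfolding d_def n_def .
qed

lemma finite_nbhd:
  assumes "multigraph V mu"
  shows "finite (nbhd V mu v)"
  using assms unfolding multigraph_def nbhd_def by auto

theorem lemma6p5:
  fixes V :: "'a set" and mu :: "'a \<Rightarrow> 'a \<Rightarrow> nat" and v :: 'a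
  assumes "multigraph V mu" and "v \<in> V"
  shows "(\<Sum>u\<in>nbhd V mu v. real (mu u v) / (real (deg V mu v) + real (mu u v)))
           \<le> real (card (nbhd V mu v)) / (1 + real (card (nbhd V mu v)))"
proof -
  have "real (deg V mu v) = (\<Sum>u\<in>nbhd V mu v. real (mu u v))"
    unfolding deg_def by simp
  then show ?thesis
    using sum_div_add_sum_le_card[OF finite_nbhd[OF assms(1)], where w = "\<lambda>u. real (mu u v)"]
    by simp
qed

end
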